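(* Let $G$ be a compact abelian group. There exists a continuous strictly positive definite function on $G$ if and only if $G$ is metrisable.
   Context: A function $f: G \to \mathbb{C}$ is strictly positive definite if for all $n$, all pairwise distinct $x_1,\dots,x_n \in G$ and all $c_1,\dots,c_n \in \mathbb{C}\setminus\{0\}$ one has $\sum_{i,j=1}^n c_i \overline{c_j} f(x_j^{-1}x_i) > 0$. *)

theory Defs
  imports "HOL-Analysis.Analysis" "HOL-Library.Complex_Order"
begin

definition topological_group :: "'a::{topological_space, ab_group_add} itself \<Rightarrow> bool" where
  "topological_group _ \<longleftrightarrow>
     continuous_on (UNIV :: ('a \<times> 'a) set) (\<lambda>p. fst p + snd p) \<and>
     continuous_on (UNIV :: 'a set) (\<lambda>x. - x)"

text \<open>Strictly positive definite: for all n \<ge> 1, pairwise distinct x_1..x_n, nonzero c_1..c_n,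
  sum_{i,j} c_i conj(c_j) f(x_j^{-1} x_i) > 0 (in additive notation x_j^{-1} x_i = x_i - x_j;
  the order on complex is the one of HOL-Library.Complex_Order: real and positive).\<close>
definition strictly_pos_def :: "('a::ab_group_add \<Rightarrow> complex) \<Rightarrow> bool" where
  "strictly_pos_def f \<longleftrightarrow>
     (\<forall>n::nat. \<forall>x::nat \<Rightarrow> 'a. \<forall>c::nat \<Rightarrow> complex.
        n \<ge> 1 \<longrightarrow> inj_on x {..<n} \<longrightarrow> (\<forall>i<n. c i \<noteq> 0) \<longrightarrow>
        (\<Sum>i<n. \<Sum>j<n. c i * cnj (c j) * f (x i - x j)) > 0)"

end

theory Submission
  imports Defs
begin

(* (=>) If f is continuous and strictly positive definite, then x |-> f(x + .) maps G
   continuously into the Banach space of bounded continuous functions.  Testing strict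
   positive definiteness on two points shows that f has no nonzero period, so this map is
   injective; being a continuous injection from a compact into a Hausdorff space, it is an
   embedding, and G is metrisable.

   (<=) As Haar measure is not available in the library, we construct von Neumann's invariant mean:
   iterated averages of a continuous g over finite lists of translates approach a unique
   constant "mean g" uniformly, and mean is linear, monotone, translation invariant and
   faithful on nonnegative functions.  The autocorrelation autocorr g x = mean(g(. + x) g)
   then satisfies  sum_ij a_i a_j autocorr g (x_i - x_j) = mean((sum_i a_i g(. + x_i))^2),
   which is >= 0, and > 0 as soon as sum_i a_i g(x_i) ~= 0.  A compact metric space carries a
   sequence of bump functions g_k separating every point from every finite set avoiding it,
   and F = sum_k 2^-k autocorr g_k is continuous and strictly positive definite. *)

section \<open>Topological abelian groups\<close>

locale topological_abelian_group =
  fixes ty :: "'a::{topological_space, ab_group_add} itself"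
  assumes group_continuous: "topological_group TYPE('a)"
begin

lemma continuous_on_group_add:
  fixes f g :: "'b::topological_space \<Rightarrow> 'a"
  assumes "continuous_on UNIV f" "continuous_on UNIV g"
  shows "continuous_on UNIV (\<lambda>x. f x + g x)"
proof -
  have add: "continuous_on UNIV (\<lambda>p::'a \<times> 'a. fst p + snd p)"
    using group_continuous by (simp add: topological_group_def)
  have "continuous_on UNIV (\<lambda>x. (f x, g x))" using assms by (intro continuous_on_Pair)
  from continuous_on_compose[OF this continuous_on_subset[OF add]] show ?thesis
    by (simp add: o_def)
qed

lemma continuous_on_group_minus:
  fixes f :: "'b::topological_space \<Rightarrow> 'a"
  assumes "continuous_on UNIV f"
  shows "continuous_on UNIV (\<lambda>x. - f x)"
proof -
  have "continuous_on UNIV (\<lambda>x::'a. - x)"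
    using group_continuous by (simp add: topological_group_def)
  from continuous_on_compose[OF assms continuous_on_subset[OF this]] show ?thesis
    by (simp add: o_def)
qed

lemma continuous_on_group_diff:
  fixes f g :: "'b::topological_space \<Rightarrow> 'a"
  assumes "continuous_on UNIV f" "continuous_on UNIV g"
  shows "continuous_on UNIV (\<lambda>x. f x - g x)"
  using continuous_on_group_add[OF assms(1) continuous_on_group_minus[OF assms(2)]] by simp

lemma continuous_on_translate:
  fixes g :: "'a \<Rightarrow> 'b::topological_space"
  assumes "continuous_on UNIV g"
  shows "continuous_on UNIV (\<lambda>x. g (x + c))"
  by (rule continuous_on_compose2[OF assms
        continuous_on_group_add[OF continuous_on_id continuous_on_const]]) auto

lemma open_translate_vimage:
  fixes W :: "'a set"
  assumes "open W"
  shows "open ((\<lambda>x. x - c) -` W)"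
  by (rule open_vimage[OF assms])
     (rule continuous_on_group_diff[OF continuous_on_id continuous_on_const])

lemma continuous_on_if_translation_uniform:
  fixes F :: "'a \<Rightarrow> 'b::metric_space"
  assumes unif: "\<And>e. e > 0 \<Longrightarrow> \<exists>W. open W \<and> 0 \<in> W \<and> (\<forall>x y. x - y \<in> W \<longrightarrow> dist (F x) (F y) < e)"
  shows "continuous_on UNIV F"
  unfolding continuous_on_topological
proof (intro ballI allI impI)
  fix y B assume "open B" "F y \<in> B"
  then obtain e where e: "e > 0" "ball (F y) e \<subseteq> B"
    using open_contains_ball by blast
  obtain W where W: "open W" "0 \<in> W" "\<And>x y. x - y \<in> W \<Longrightarrow> dist (F x) (F y) < e"
    using unif[OF e(1)] by blast
  have "F x \<in> B" if "x \<in> (\<lambda>x. x - y) -` W" for x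
    using W(3)[of x y] that e(2) by (auto simp: dist_commute)
  then show "\<exists>A. open A \<and> y \<in> A \<and> (\<forall>x\<in>UNIV. x \<in> A \<longrightarrow> F x \<in> B)"
    using open_translate_vimage[OF W(1)] W(2) by (intro exI[of _ "(\<lambda>x. x - y) -` W"]) auto
qed

end

locale compact_abelian_group = topological_abelian_group ty
  for ty :: "'a::{topological_space, ab_group_add} itself" +
  assumes compact_group: "compact (UNIV :: 'a set)"
begin

text \<open>On a compact group every continuous function is uniformly continuous (tube lemma).\<close>

lemma uniformly_continuous_translates:
  fixes g :: "'a \<Rightarrow> 'b::metric_space"
  assumes g: "continuous_on UNIV g" and e: "e > 0"
  shows "\<exists>W. open W \<and> 0 \<in> W \<and> (\<forall>x. \<forall>w\<in>W. dist (g (x + w)) (g x) < e)"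
proof -
  define S where "S = {p::'a \<times> 'a. dist (g (fst p + snd p)) (g (snd p)) < e}"
  have c1: "continuous_on UNIV (\<lambda>p::'a \<times> 'a. g (fst p + snd p))"
    by (rule continuous_on_compose2[OF g continuous_on_group_add])
       (auto intro: continuous_on_fst continuous_on_snd continuous_on_id)
  have c2: "continuous_on UNIV (\<lambda>p::'a \<times> 'a. g (snd p))"
    by (rule continuous_on_compose2[OF g continuous_on_snd]) (auto intro: continuous_on_id)
  have "open S" unfolding S_def
    by (intro open_Collect_less continuous_on_dist c1 c2 continuous_on_const)
  moreover have "{0} \<times> UNIV \<subseteq> S" using e by (auto simp: S_def)
  ultimately obtain W where W: "0 \<in> W" "open W" "W \<times> UNIV \<subseteq> S"
    using Elementary_Topology.tube_lemma[OF compact_group] by metis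
  have "dist (g (x + w)) (g x) < e" if "w \<in> W" for x w
  proof -
    from W(3) that have "(w, x) \<in> S" by blast
    then show ?thesis by (simp add: S_def add.commute)
  qed
  with W(1,2) show ?thesis by blast
qed

lemma finite_translate_cover:
  fixes W :: "'a set"
  assumes W: "open W" "0 \<in> W"
  shows "\<exists>bs. bs \<noteq> [] \<and> (\<forall>y. \<exists>b\<in>set bs. y - b \<in> W)"
proof -
  have "UNIV \<subseteq> (\<Union>b\<in>UNIV. (\<lambda>y. y - b) -` W)"
  proof
    fix y :: 'a
    show "y \<in> (\<Union>b\<in>UNIV. (\<lambda>y. y - b) -` W)" using W(2) by (intro UN_I[of y]) auto
  qed
  then obtain T where T: "finite T" "UNIV \<subseteq> (\<Union>b\<in>T. (\<lambda>y. y - b) -` W)"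
    using compactE_image[OF compact_group, of UNIV "\<lambda>b. (\<lambda>y. y - b) -` W"]
      open_translate_vimage[OF W(1)] by (metis subset_UNIV)
  obtain bs where "set bs = T" using finite_list[OF T(1)] by blast
  with T(2) show ?thesis by (intro exI[of _ bs]) auto
qed

end

section \<open>Strictly positive definite functions force metrisability\<close>

text \<open>A strictly positive definite function has no nonzero period: for a period a \<noteq> 0 the
  quadratic form at the points a, 0 with coefficients 1, -1 would vanish.\<close>

lemma strictly_pos_def_no_period:
  fixes f :: "'a::ab_group_add \<Rightarrow> complex"
  assumes spd: "strictly_pos_def f" and period: "\<And>z. f (a + z) = f z"
  shows "a = 0"
proof (rule ccontr)
  assume a: "a \<noteq> 0"
  define x :: "nat \<Rightarrow> 'a" where "x i = (if i = 0 then a else 0)" for i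
  define c :: "nat \<Rightarrow> complex" where "c i = (if i = 0 then 1 else -1)" for i
  have "inj_on x {..<2}" using a by (auto simp: x_def inj_on_def less_2_cases_iff)
  then have "(\<Sum>i<2. \<Sum>j<2. c i * cnj (c j) * f (x i - x j)) > 0"
    using spd unfolding strictly_pos_def_def by (auto simp: c_def)
  moreover have "f a = f 0" "f (- a) = f 0"
    using period[of 0] period[of "- a"] by simp_all
  then have "(\<Sum>i<2. \<Sum>j<2. c i * cnj (c j) * f (x i - x j)) = 0"
    by (simp add: numeral_2_eq_2 x_def c_def)
  ultimately show False by simp
qed

context compact_abelian_group
begin

lemma translate_bcontfun:
  fixes f :: "'a \<Rightarrow> 'b::metric_space"
  assumes "continuous_on UNIV f"
  shows "apply_bcontfun (Bcontfun (\<lambda>z. f (x + z))) = (\<lambda>z. f (x + z))"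
proof -
  have c: "continuous_on UNIV (\<lambda>z. f (x + z))"
    using continuous_on_translate[OF assms, of x] by (simp add: add.commute)
  then have "bounded (range (\<lambda>z. f (x + z)))"
    using compact_continuous_image[OF c compact_group] by (simp add: compact_imp_bounded)
  with c show ?thesis by (simp add: bcontfun_def Bcontfun_inverse)
qed

lemma continuous_on_translates:
  fixes f :: "'a \<Rightarrow> 'b::metric_space"
  assumes f: "continuous_on UNIV f"
  shows "continuous_on UNIV (\<lambda>x. Bcontfun (\<lambda>z. f (x + z)))"
proof (rule continuous_on_if_translation_uniform)
  fix e :: real assume "e > 0"
  then obtain W where W: "open W" "0 \<in> W" "\<And>x w. w \<in> W \<Longrightarrow> dist (f (x + w)) (f x) < e/2"
    using uniformly_continuous_translates[OF f, of "e/2"] by auto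
  have "dist (Bcontfun (\<lambda>z. f (x + z))) (Bcontfun (\<lambda>z. f (y + z))) < e" if "x - y \<in> W" for x y
  proof -
    have "dist (Bcontfun (\<lambda>z. f (x + z))) (Bcontfun (\<lambda>z. f (y + z))) \<le> e/2"
    proof (rule dist_bound)
      fix z
      have "dist (f (x + z)) (f (y + z)) < e/2"
        using W(3)[OF that, of "y + z"] by (simp add: algebra_simps)
      then show "dist (apply_bcontfun (Bcontfun (\<lambda>z. f (x + z))) z)
                      (apply_bcontfun (Bcontfun (\<lambda>z. f (y + z))) z) \<le> e/2"
        by (simp only: translate_bcontfun[OF f])
    qed
    with \<open>e > 0\<close> show ?thesis by linarith
  qed
  with W(1,2) show "\<exists>W. open W \<and> 0 \<in> W \<and> (\<forall>x y. x - y \<in> W \<longrightarrow>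
      dist (Bcontfun (\<lambda>z. f (x + z))) (Bcontfun (\<lambda>z. f (y + z))) < e)" by blast
qed

end

theorem metrizable_if_strictly_pos_def:
  fixes f :: "'a::{t2_space, ab_group_add} \<Rightarrow> complex"
  assumes "compact_abelian_group TYPE('a)"
    and f: "continuous_on UNIV f" and spd: "strictly_pos_def f"
  shows "metrizable_space (euclidean :: 'a topology)"
proof -
  interpret compact_abelian_group "TYPE('a)" by fact
  define \<phi> where "\<phi> x = Bcontfun (\<lambda>z. f (x + z))" for x
  have "inj \<phi>"
  proof (rule injI)
    fix x y assume "\<phi> x = \<phi> y"
    then have "apply_bcontfun (\<phi> x) z = apply_bcontfun (\<phi> y) z" for z by simp
    then have translates: "f (x + z) = f (y + z)" for z
      by (simp add: \<phi>_def translate_bcontfun[OF f])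
    have "f ((x - y) + z) = f z" for z
      using translates[of "z - y"] by (simp add: algebra_simps)
    then show "x = y" using strictly_pos_def_no_period[OF spd] by fastforce
  qed
  moreover have "continuous_on UNIV \<phi>"
    unfolding \<phi>_def by (rule continuous_on_translates[OF f])
  ultimately have "embedding_map (euclidean :: 'a topology) euclidean \<phi>"
    using compact_group
    by (intro continuous_imp_embedding_map) (auto simp: compact_space_def Hausdorff_space_euclidean)
  then have "(euclidean :: 'a topology) homeomorphic_space subtopology euclidean (range \<phi>)"
    using embedding_map_imp_homeomorphic_space by fastforce
  then show ?thesis
    using homeomorphic_metrizable_space metrizable_space_subtopology metrizable_space_euclidean
    by blast
qed

section \<open>Averaging over translates\<close>

definition avg :: "'a::ab_group_add list \<Rightarrow> ('a \<Rightarrow> real) \<Rightarrow> 'a \<Rightarrow> real" where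
  "avg as g x = (\<Sum>a\<leftarrow>as. g (x + a)) / real (length as)"

definition avgs :: "'a::ab_group_add list list \<Rightarrow> ('a \<Rightarrow> real) \<Rightarrow> 'a \<Rightarrow> real" where
  "avgs ass g = foldr avg ass g"

text \<open>Only averages over nonempty lists are genuine averages.\<close>

definition all_nonempty :: "'a list list \<Rightarrow> bool" where
  "all_nonempty ass \<longleftrightarrow> (\<forall>as\<in>set ass. as \<noteq> [])"

lemma avgs_Nil [simp]: "avgs [] g = g"
  by (simp add: avgs_def)

lemma avgs_Cons [simp]: "avgs (as # ass) g = avg as (avgs ass g)"
  by (simp add: avgs_def)

lemma avgs_append: "avgs (ass @ bss) g = avgs ass (avgs bss g)"
  by (simp add: avgs_def)

lemma all_nonempty_simps [simp]:
  "all_nonempty []"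
  "all_nonempty (as # ass) \<longleftrightarrow> as \<noteq> [] \<and> all_nonempty ass"
  "all_nonempty (ass @ bss) \<longleftrightarrow> all_nonempty ass \<and> all_nonempty bss"
  by (auto simp: all_nonempty_def)

lemma sum_list_le_const:
  fixes f :: "'b \<Rightarrow> real"
  assumes "\<And>a. a \<in> set as \<Longrightarrow> f a \<le> c"
  shows "(\<Sum>a\<leftarrow>as. f a) \<le> real (length as) * c"
  using sum_list_mono[of as f "\<lambda>_. c"] assms by (simp add: sum_list_triv)

lemma sum_list_ge_const:
  fixes f :: "'b \<Rightarrow> real"
  assumes "\<And>a. a \<in> set as \<Longrightarrow> c \<le> f a"
  shows "real (length as) * c \<le> (\<Sum>a\<leftarrow>as. f a)"
  using sum_list_mono[of as "\<lambda>_. c" f] assms by (simp add: sum_list_triv)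

lemma avg_lower:
  assumes "as \<noteq> []" "\<And>x. lo \<le> g x"
  shows "lo \<le> avg as g x"
  using sum_list_ge_const[of as lo "\<lambda>a. g (x + a)"] assms
  by (simp add: avg_def field_simps)

lemma avg_upper:
  assumes "as \<noteq> []" "\<And>x. g x \<le> hi"
  shows "avg as g x \<le> hi"
  using sum_list_le_const[of as "\<lambda>a. g (x + a)" hi] assms
  by (simp add: avg_def field_simps)

lemma avgs_lower:
  assumes "all_nonempty ass" "\<And>x. lo \<le> g x"
  shows "lo \<le> avgs ass g x"
  using assms(1) by (induction ass arbitrary: x) (simp_all add: assms(2) avg_lower)

lemma avgs_upper:
  assumes "all_nonempty ass" "\<And>x. g x \<le> hi"
  shows "avgs ass g x \<le> hi"
  using assms(1) by (induction ass arbitrary: x) (simp_all add: assms(2) avg_upper)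

lemma avgs_near:
  assumes "all_nonempty ass" "\<And>x. \<bar>g x - c\<bar> \<le> e"
  shows "\<bar>avgs ass g x - c\<bar> \<le> e"
proof -
  have "c - e \<le> g y" "g y \<le> c + e" for y using assms(2)[of y] by (simp_all add: abs_le_iff)
  then show ?thesis
    using avgs_lower[OF assms(1), of "c - e" g x] avgs_upper[OF assms(1), of g "c + e" x]
    by (simp add: abs_le_iff)
qed

text \<open>Averaging is linear and commutes with translations and with other averagings; the
  last point is what makes the mean unique.\<close>

lemma avg_add: "avg as (\<lambda>x. f x + g x) = (\<lambda>x. avg as f x + avg as g x)"
proof (rule ext)
  fix x
  have "(\<Sum>a\<leftarrow>as. f (x + a) + g (x + a)) = (\<Sum>a\<leftarrow>as. f (x + a)) + (\<Sum>a\<leftarrow>as. g (x + a))"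
    by (rule sum_list_addf)
  then show "avg as (\<lambda>x. f x + g x) x = avg as f x + avg as g x"
    by (simp add: avg_def add_divide_distrib)
qed

lemma avg_scale: "avg as (\<lambda>x. r * f x) = (\<lambda>x. r * avg as f x)"
  by (rule ext) (simp add: avg_def sum_list_const_mult)

lemma avgs_add: "avgs ass (\<lambda>x. f x + g x) = (\<lambda>x. avgs ass f x + avgs ass g x)"
  by (induction ass) (simp_all add: avg_add)

lemma avgs_scale: "avgs ass (\<lambda>x. r * f x) = (\<lambda>x. r * avgs ass f x)"
  by (induction ass) (simp_all add: avg_scale)

lemma avg_translate: "avg as (\<lambda>x. g (x + c)) = (\<lambda>x. avg as g (x + c))"
  by (rule ext) (simp add: avg_def ac_simps)

lemma avgs_translate: "avgs ass (\<lambda>x. g (x + c)) = (\<lambda>x. avgs ass g (x + c))"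
  by (induction ass) (simp_all add: avg_translate)

lemma avg_single: "avg [a] g = (\<lambda>x. g (x + a))"
  by (rule ext) (simp add: avg_def)

lemma avg_comm: "avg as (avg bs g) = avg bs (avg as g)"
proof (rule ext)
  fix x
  let ?N = "real (length as) * real (length bs)"
  have "avg as (avg bs g) x = (\<Sum>i<length as. \<Sum>j<length bs. g (x + as!i + bs!j)) / ?N"
    by (simp add: avg_def sum_list_sum_nth atLeast0LessThan sum_divide_distrib add.assoc
        mult.commute)
  also have "\<dots> = (\<Sum>j<length bs. \<Sum>i<length as. g (x + bs!j + as!i)) / ?N"
    by (subst sum.swap) (simp add: ac_simps)
  also have "\<dots> = avg bs (avg as g) x"
    by (simp add: avg_def sum_list_sum_nth atLeast0LessThan sum_divide_distrib add.assoc)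
  finally show "avg as (avg bs g) x = avg bs (avg as g) x" .
qed

lemma avgs_comm: "avgs ass (avgs bss g) = avgs bss (avgs ass g)"
proof -
  have avg_avgs: "avg as (avgs bss h) = avgs bss (avg as h)" for as h
    by (induction bss) (simp_all add: avg_comm)
  show ?thesis by (induction ass) (simp_all add: avg_avgs)
qed

lemma avgs_translation_variation:
  assumes "all_nonempty ass" "\<And>y. \<bar>g (y + w) - g y\<bar> \<le> e"
  shows "\<bar>avgs ass g (y + w) - avgs ass g y\<bar> \<le> e"
proof -
  have "avgs ass (\<lambda>z. g (z + w) + (-1) * g z)
      = (\<lambda>x. avgs ass (\<lambda>z. g (z + w)) x + avgs ass (\<lambda>z. (-1) * g z) x)"
    by (rule avgs_add)
  also have "\<dots> = (\<lambda>x. avgs ass g (x + w) + (-1) * avgs ass g x)"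
    by (simp add: avgs_translate avgs_scale[of ass "-1" g, simplified])
  finally have "avgs ass (\<lambda>z. g (z + w) - g z) y = avgs ass g (y + w) - avgs ass g y"
    by (simp add: fun_eq_iff)
  moreover have "\<bar>avgs ass (\<lambda>z. g (z + w) - g z) y - 0\<bar> \<le> e"
    by (rule avgs_near[OF assms(1)]) (use assms(2) in simp)
  ultimately show ?thesis by simp
qed

text \<open>Averaging h over the N translates moving p onto the N cover points keeps the minimum
  value and shrinks the variation by the factor 1 - 3/(4N): every such average contains one
  term within B/4 of the minimum.\<close>

lemma averaging_step:
  fixes h :: "'a::ab_group_add \<Rightarrow> real"
  assumes cover: "bs \<noteq> []" "\<And>y. \<exists>b\<in>set bs. y - b \<in> W"
    and variation: "\<And>y w. w \<in> W \<Longrightarrow> \<bar>h (y + w) - h y\<bar> \<le> B / 4"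
    and min: "\<And>y. h p \<le> h y" and bound: "\<And>y. h y \<le> h p + B"
  shows "h p \<le> avg (map (\<lambda>b. p - b) bs) h x"
    and "avg (map (\<lambda>b. p - b) bs) h x \<le> h p + B * (1 - 3 / (4 * real (length bs)))"
proof -
  let ?as = "map (\<lambda>b. p - b) bs"
  define N where "N = real (length bs)"
  have N: "N \<ge> 1" using cover(1) by (simp add: N_def Suc_le_eq)
  show "h p \<le> avg ?as h x" by (rule avg_lower) (use cover(1) min in auto)
  obtain b0 where b0: "b0 \<in> set bs" "x - b0 \<in> W" using cover(2) by blast
  have "h (p + (x - b0)) \<le> h p + B / 4"
    using variation[OF b0(2), of p] by (simp only: abs_le_iff) linarith
  moreover have "p + (x - b0) = x + (p - b0)" by (simp add: algebra_simps)
  ultimately have "h (x + (p - b0)) \<le> h p + B / 4" by simp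
  moreover have "real (length (remove1 b0 bs)) = N - 1"
    using b0(1) length_pos_if_in_set[OF b0(1)]
    by (simp add: N_def length_remove1 of_nat_diff Suc_le_eq)
  then have "(\<Sum>b\<leftarrow>remove1 b0 bs. h (x + (p - b))) \<le> (N - 1) * (h p + B)"
    using sum_list_le_const[of "remove1 b0 bs" "\<lambda>b. h (x + (p - b))" "h p + B"] bound by simp
  ultimately have "(\<Sum>b\<leftarrow>bs. h (x + (p - b))) \<le> h p + B / 4 + (N - 1) * (h p + B)"
    using sum_list_map_remove1[OF b0(1), of "\<lambda>b. h (x + (p - b))"] by linarith
  also have "\<dots> = N * (h p + B * (1 - 3 / (4 * N)))"
    using N by (simp add: field_simps)
  finally have sum_bound: "(\<Sum>b\<leftarrow>bs. h (x + (p - b))) \<le> N * (h p + B * (1 - 3 / (4 * N)))" .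
  have "avg ?as h x = (\<Sum>b\<leftarrow>bs. h (x + (p - b))) / N" by (simp add: avg_def N_def o_def)
  then have "avg ?as h x \<le> h p + B * (1 - 3 / (4 * N))"
    using sum_bound N by (simp add: divide_le_eq mult.commute)
  then show "avg ?as h x \<le> h p + B * (1 - 3 / (4 * real (length bs)))" by (simp add: N_def)
qed

section \<open>The invariant mean\<close>

definition has_mean :: "('a::ab_group_add \<Rightarrow> real) \<Rightarrow> real \<Rightarrow> bool" where
  "has_mean g c \<longleftrightarrow> (\<forall>e>0. \<exists>ass. all_nonempty ass \<and> (\<forall>x. \<bar>avgs ass g x - c\<bar> \<le> e))"

definition mean :: "('a::ab_group_add \<Rightarrow> real) \<Rightarrow> real" where
  "mean g = (THE c. has_mean g c)"

text \<open>Uniqueness: averaging one approximation by the other and using commutativity of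
  averaging gives a value close to both constants.\<close>

lemma has_mean_unique:
  assumes "has_mean g c" "has_mean g c'"
  shows "c = c'"
proof (rule ccontr)
  assume "c \<noteq> c'"
  define e where "e = \<bar>c - c'\<bar> / 3"
  have e: "e > 0" using \<open>c \<noteq> c'\<close> by (simp add: e_def)
  obtain ass where a: "all_nonempty ass" "\<And>x. \<bar>avgs ass g x - c\<bar> \<le> e"
    using assms(1) e by (metis has_mean_def)
  obtain bss where b: "all_nonempty bss" "\<And>x. \<bar>avgs bss g x - c'\<bar> \<le> e"
    using assms(2) e by (metis has_mean_def)
  have "\<bar>avgs bss (avgs ass g) 0 - c\<bar> \<le> e" by (rule avgs_near[OF b(1) a(2)])
  moreover have "\<bar>avgs ass (avgs bss g) 0 - c'\<bar> \<le> e" by (rule avgs_near[OF a(1) b(2)])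
  ultimately show False using avgs_comm[of ass bss g] e_def e by (auto simp: abs_if split: if_splits)
qed

lemma mean_eqI: "has_mean g c \<Longrightarrow> mean g = c"
  unfolding mean_def using has_mean_unique by blast

lemma has_mean_avgs:
  assumes "has_mean g c" "all_nonempty bss"
  shows "has_mean (avgs bss g) c"
  unfolding has_mean_def
proof (intro allI impI)
  fix e :: real assume "e > 0"
  then obtain ass where a: "all_nonempty ass" "\<And>x. \<bar>avgs ass g x - c\<bar> \<le> e"
    using assms(1) by (metis has_mean_def)
  have "\<bar>avgs bss (avgs ass g) x - c\<bar> \<le> e" for x by (rule avgs_near[OF assms(2) a(2)])
  then have "\<bar>avgs ass (avgs bss g) x - c\<bar> \<le> e" for x by (simp add: avgs_comm)
  with a(1) show "\<exists>ass. all_nonempty ass \<and> (\<forall>x. \<bar>avgs ass (avgs bss g) x - c\<bar> \<le> e)"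
    by blast
qed

lemma has_mean_translate:
  assumes "has_mean g c"
  shows "has_mean (\<lambda>x. g (x + a)) c"
  using has_mean_avgs[OF assms, of "[[a]]"] by (simp add: avg_single)

lemma has_mean_add:
  assumes "has_mean f c" "has_mean g d"
  shows "has_mean (\<lambda>x. f x + g x) (c + d)"
  unfolding has_mean_def
proof (intro allI impI)
  fix e :: real assume "e > 0"
  then obtain ass where a: "all_nonempty ass" "\<And>x. \<bar>avgs ass f x - c\<bar> \<le> e/2"
    using assms(1) by (metis has_mean_def half_gt_zero)
  have "has_mean (avgs ass g) d" by (rule has_mean_avgs[OF assms(2) a(1)])
  then obtain bss where b: "all_nonempty bss" "\<And>x. \<bar>avgs bss (avgs ass g) x - d\<bar> \<le> e/2"
    using \<open>e > 0\<close> by (metis has_mean_def half_gt_zero)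
  have f_near: "\<bar>avgs bss (avgs ass f) x - c\<bar> \<le> e/2" for x by (rule avgs_near[OF b(1) a(2)])
  have "\<bar>avgs (bss @ ass) (\<lambda>x. f x + g x) x - (c + d)\<bar> \<le> e" for x
    using b(2)[of x] f_near[of x] by (auto simp: avgs_append avgs_add abs_if split: if_splits)
  with a(1) b(1) show "\<exists>ass. all_nonempty ass \<and> (\<forall>x. \<bar>avgs ass (\<lambda>x. f x + g x) x - (c + d)\<bar> \<le> e)"
    by (intro exI[of _ "bss @ ass"]) simp
qed

lemma has_mean_scale:
  assumes "has_mean f c"
  shows "has_mean (\<lambda>x. r * f x) (r * c)"
  unfolding has_mean_def
proof (intro allI impI)
  fix e :: real assume "e > 0"
  then obtain ass where a: "all_nonempty ass" "\<And>x. \<bar>avgs ass f x - c\<bar> \<le> e / (\<bar>r\<bar> + 1)"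
    using assms \<open>e > 0\<close> unfolding has_mean_def
    by (metis abs_ge_zero add_nonneg_pos divide_pos_pos zero_less_one)
  have "\<bar>avgs ass (\<lambda>x. r * f x) x - r * c\<bar> \<le> e" for x
  proof -
    have "\<bar>avgs ass (\<lambda>x. r * f x) x - r * c\<bar> = \<bar>r\<bar> * \<bar>avgs ass f x - c\<bar>"
      by (simp add: avgs_scale abs_mult[symmetric] right_diff_distrib)
    also have "\<dots> \<le> (\<bar>r\<bar> + 1) * (e / (\<bar>r\<bar> + 1))"
      by (rule mult_mono) (use a(2)[of x] in auto)
    finally show ?thesis by simp
  qed
  with a(1) show "\<exists>ass. all_nonempty ass \<and> (\<forall>x. \<bar>avgs ass (\<lambda>x. r * f x) x - r * c\<bar> \<le> e)"
    by blast
qed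

lemma has_mean_const: "has_mean (\<lambda>x. c) c"
  unfolding has_mean_def by (auto intro!: exI[of _ "[]"])

lemma has_mean_sum:
  assumes "finite I" "\<And>i. i \<in> I \<Longrightarrow> has_mean (f i) (c i)"
  shows "has_mean (\<lambda>x. \<Sum>i\<in>I. f i x) (\<Sum>i\<in>I. c i)"
  using assms by (induction I rule: finite_induct) (simp_all add: has_mean_const has_mean_add)

lemma has_mean_lower:
  assumes "has_mean g c" "\<And>x. lo \<le> g x"
  shows "lo \<le> c"
proof (rule field_le_epsilon)
  fix e :: real assume "e > 0"
  then obtain ass where a: "all_nonempty ass" "\<And>x. \<bar>avgs ass g x - c\<bar> \<le> e"
    using assms(1) by (metis has_mean_def)
  have "lo \<le> avgs ass g 0" using avgs_lower[OF a(1) assms(2)] by simp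
  then show "lo \<le> c + e" using a(2)[of 0] by simp
qed

lemma has_mean_dist:
  assumes "has_mean f c" "has_mean g d" "\<And>x. \<bar>f x - g x\<bar> \<le> e"
  shows "\<bar>c - d\<bar> \<le> e"
proof -
  have diff: "has_mean (\<lambda>x. f x + (-1) * g x) (c + (-1) * d)"
    by (intro has_mean_add has_mean_scale assms(1,2))
  have below: "- e \<le> f x + (-1) * g x" and above: "- e \<le> (-1) * (f x + (-1) * g x)" for x
    using assms(3)[of x] by (simp_all add: abs_le_iff)
  have "- e \<le> c + (-1) * d" by (rule has_mean_lower[OF diff below])
  moreover have "- e \<le> (-1) * (c + (-1) * d)" by (rule has_mean_lower[OF has_mean_scale[OF diff] above])
  ultimately show ?thesis by (simp add: abs_le_iff)
qed

context compact_abelian_group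
begin

lemma continuous_on_avgs:
  fixes g :: "'a \<Rightarrow> real"
  assumes g: "continuous_on UNIV g"
  shows "continuous_on UNIV (avgs ass g)"
proof -
  have "continuous_on UNIV (avg as h)" if h: "continuous_on UNIV h" for as and h :: "'a \<Rightarrow> real"
  proof -
    have "avg as h = (\<lambda>x. (\<Sum>i<length as. h (x + as!i)) / real (length as))"
      by (rule ext) (simp add: avg_def sum_list_sum_nth atLeast0LessThan)
    moreover have "continuous_on UNIV (\<lambda>x. (\<Sum>i<length as. h (x + as!i)) / real (length as))"
      by (cases "as = []")
         (simp_all add: continuous_on_divide continuous_on_sum continuous_on_translate[OF h])
    ultimately show ?thesis by simp
  qed
  then show ?thesis by (induction ass) (simp_all add: g)
qed

text \<open>Iterating the averaging step: a continuous g has iterated averages of arbitrarily small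
  variation.  Each step shrinks a variation bound e/2 + D r^k to e/2 + D r^(k+1).\<close>

lemma small_variation_averages:
  fixes g :: "'a \<Rightarrow> real"
  assumes g: "continuous_on UNIV g" and e: "e > 0"
  shows "\<exists>ass m. all_nonempty ass \<and> (\<forall>x. m \<le> avgs ass g x \<and> avgs ass g x \<le> m + e)"
proof -
  obtain W where W: "open W" "0 \<in> W" "\<And>x w. w \<in> W \<Longrightarrow> dist (g (x + w)) (g x) < e/8"
    using uniformly_continuous_translates[OF g, of "e/8"] e by auto
  have variation: "\<bar>avgs ass g (y + w) - avgs ass g y\<bar> \<le> e/8"
    if "all_nonempty ass" "w \<in> W" for ass y w
    by (rule avgs_translation_variation[OF that(1)])
       (use W(3)[OF that(2)] in \<open>simp add: dist_real_def less_imp_le\<close>)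
  obtain bs where bs: "bs \<noteq> []" "\<And>y. \<exists>b\<in>set bs. y - b \<in> W"
    using finite_translate_cover[OF W(1,2)] by blast
  obtain p0 p1 where p0: "\<And>y. g p0 \<le> g y" and p1: "\<And>y. g y \<le> g p1"
    using continuous_attains_inf[OF compact_group _ g] continuous_attains_sup[OF compact_group _ g]
    by auto
  define D where "D = g p1 - g p0"
  have D: "0 \<le> D" using p0[of p1] by (simp add: D_def)
  define N where "N = real (length bs)"
  define r where "r = 1 - 3 / (4 * N)"
  have N: "1 \<le> N" using bs(1) by (simp add: N_def Suc_le_eq)
  then have "3 / (4 * N) \<le> 3 / 4" by (intro divide_left_mono) auto
  moreover have "0 < 3 / (4 * N)" using N by simp
  ultimately have r: "0 \<le> r" "r < 1" unfolding r_def by linarith+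
  have shrink: "\<exists>ass m. all_nonempty ass \<and>
      (\<forall>x. m \<le> avgs ass g x \<and> avgs ass g x \<le> m + (e/2 + D * r^k))" for k
  proof (induction k)
    case 0
    have "g p0 \<le> g x \<and> g x \<le> g p0 + (e/2 + D * r^0)" for x
      using p0[of x] p1[of x] e by (simp add: D_def)
    then show ?case by (intro exI[of _ "[]"] exI[of _ "g p0"]) simp
  next
    case (Suc k)
    then obtain ass m where am: "all_nonempty ass" "\<And>x. m \<le> avgs ass g x"
      "\<And>x. avgs ass g x \<le> m + (e/2 + D * r^k)" by blast
    define B where "B = e/2 + D * r^k"
    define h where "h = avgs ass g"
    obtain p where p: "\<And>y. h p \<le> h y"
      using continuous_attains_inf[OF compact_group _ continuous_on_avgs[OF g]] by (auto simp: h_def)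
    have bound: "h y \<le> h p + B" for y
      using am(2)[of p] am(3)[of y] by (simp add: h_def B_def)
    have "0 \<le> D * r^k" using D r by simp
    then have var: "\<bar>h (y + w) - h y\<bar> \<le> B / 4" if "w \<in> W" for y w
      using variation[OF am(1) that, of y] by (simp add: h_def B_def)
    define as where "as = map (\<lambda>b. p - b) bs"
    have avgs_as: "avgs (as # ass) g x = avg as h x" for x by (simp add: h_def)
    have low: "h p \<le> avg as h x" and up: "avg as h x \<le> h p + B * r" for x
      using averaging_step[OF bs var p bound, of x] by (simp_all add: as_def r_def N_def)
    have contract: "B * r \<le> e/2 + D * r ^ Suc k"
      using r e mult_left_le[of r "e/2"] by (simp add: B_def algebra_simps)
    have "h p \<le> avgs (as # ass) g x \<and> avgs (as # ass) g x \<le> h p + (e/2 + D * r ^ Suc k)" for x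
      unfolding avgs_as using low[of x] up[of x] contract by linarith
    moreover have "all_nonempty (as # ass)" using am(1) bs(1) by (simp add: as_def)
    ultimately show ?case by blast
  qed
  obtain k where k: "D * r^k \<le> e/2"
  proof -
    have "(\<lambda>k. D * r^k) \<longlonglongrightarrow> 0"
      by (intro tendsto_mult_right_zero LIMSEQ_realpow_zero r)
    moreover have "0 < e/2" using e by simp
    ultimately have "\<forall>\<^sub>F k in sequentially. D * r^k < e/2" by (rule order_tendstoD(2))
    then obtain N where "D * r^N < e/2" unfolding eventually_sequentially by blast
    then show ?thesis using that less_imp_le by blast
  qed
  from shrink[of k] obtain ass m where "all_nonempty ass" "\<And>x. m \<le> avgs ass g x"
    and close: "\<And>x. avgs ass g x \<le> m + (e/2 + D * r^k)" by blast
  moreover have "avgs ass g x \<le> m + e" for x using close[of x] k by linarith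
  ultimately show ?thesis by blast
qed

text \<open>Existence of the mean: the constants m_n of ever smaller variation approach their
  supremum.\<close>

lemma has_mean_mean:
  fixes g :: "'a \<Rightarrow> real"
  assumes g: "continuous_on UNIV g"
  shows "has_mean g (mean g)"
proof -
  have "\<forall>n. \<exists>ass m. all_nonempty ass \<and>
      (\<forall>x. m \<le> avgs ass g x \<and> avgs ass g x \<le> m + 1 / real (Suc n))"
    using small_variation_averages[OF g] by simp
  then obtain A M where AM: "\<And>n. all_nonempty (A n)" "\<And>n x. M n \<le> avgs (A n) g x"
    "\<And>n x. avgs (A n) g x \<le> M n + 1 / real (Suc n)"
    by metis
  have cross: "M n \<le> M k + 1 / real (Suc k)" for n k
  proof -
    have "M n \<le> avgs (A k) (avgs (A n) g) 0" by (rule avgs_lower[OF AM(1) AM(2)])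
    also have "\<dots> = avgs (A n) (avgs (A k) g) 0" by (simp only: avgs_comm)
    also have "\<dots> \<le> M k + 1 / real (Suc k)" by (rule avgs_upper[OF AM(1) AM(3)])
    finally show ?thesis .
  qed
  define c where "c = (SUP n. M n)"
  have bdd: "bdd_above (range M)" using cross[of _ 0] by (auto intro!: bdd_aboveI)
  have c: "M k \<le> c" "c \<le> M k + 1 / real (Suc k)" for k
    unfolding c_def using cross by (auto intro: cSUP_upper[OF _ bdd] cSUP_least)
  have "has_mean g c"
    unfolding has_mean_def
  proof (intro allI impI)
    fix e :: real assume "e > 0"
    then obtain k where k: "1 / real (Suc k) < e" using nat_approx_posE by blast
    have "\<bar>avgs (A k) g x - c\<bar> \<le> e" for x
      using AM(2)[of k x] AM(3)[of k x] c[of k] k by (simp add: abs_le_iff)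
    then show "\<exists>ass. all_nonempty ass \<and> (\<forall>x. \<bar>avgs ass g x - c\<bar> \<le> e)" using AM(1) by blast
  qed
  then show ?thesis by (simp add: mean_eqI)
qed

lemma mean_lower:
  fixes g :: "'a \<Rightarrow> real"
  shows "continuous_on UNIV g \<Longrightarrow> (\<And>x. lo \<le> g x) \<Longrightarrow> lo \<le> mean g"
  using has_mean_lower has_mean_mean by blast

text \<open>The mean is faithful: a continuous nonnegative function that is positive somewhere has
  positive mean, because finitely many translates of the set where it is large cover the
  group.\<close>

lemma mean_pos:
  fixes g :: "'a \<Rightarrow> real"
  assumes g: "continuous_on UNIV g" and nonneg: "\<And>x. 0 \<le> g x" and pos: "g p > 0"
  shows "mean g > 0"
proof -
  define W where "W = (\<lambda>w. w - (- p)) -` {x. g p / 2 < g x}"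
  have "open W" unfolding W_def
    by (intro open_translate_vimage open_Collect_less continuous_on_const g)
  moreover have "0 \<in> W" using pos by (simp add: W_def)
  ultimately obtain bs where bs: "bs \<noteq> []" "\<And>y. \<exists>b\<in>set bs. y - b \<in> W"
    using finite_translate_cover by blast
  define N where "N = real (length bs)"
  have N: "N > 0" using bs(1) by (simp add: N_def)
  have "g p / 2 / N \<le> avgs [map (\<lambda>b. p - b) bs] g y" for y
  proof -
    obtain b0 where b0: "b0 \<in> set bs" "y - b0 \<in> W" using bs(2) by blast
    have "g p / 2 < g (y + (p - b0))" using b0(2) by (simp add: W_def algebra_simps)
    moreover have "0 \<le> (\<Sum>b\<leftarrow>remove1 b0 bs. g (y + (p - b)))"
      by (rule sum_list_nonneg) (auto intro: nonneg)
    ultimately have "g p / 2 \<le> (\<Sum>b\<leftarrow>bs. g (y + (p - b)))"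
      using sum_list_map_remove1[OF b0(1), of "\<lambda>b. g (y + (p - b))"] by linarith
    then have "g p / 2 / N \<le> (\<Sum>b\<leftarrow>bs. g (y + (p - b))) / N"
      by (rule divide_right_mono) (use N in simp)
    moreover have "avgs [map (\<lambda>b. p - b) bs] g y = (\<Sum>b\<leftarrow>bs. g (y + (p - b))) / N"
      by (simp add: avg_def o_def N_def)
    ultimately show ?thesis by simp
  qed
  moreover have "has_mean (avgs [map (\<lambda>b. p - b) bs] g) (mean g)"
    by (rule has_mean_avgs[OF has_mean_mean[OF g]]) (simp add: bs(1))
  ultimately have "g p / 2 / N \<le> mean g" using has_mean_lower by blast
  moreover have "g p / 2 / N > 0" using pos N by simp
  ultimately show ?thesis by linarith
qed

end

section \<open>Autocorrelations are positive semidefinite\<close>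

definition autocorr :: "('a::ab_group_add \<Rightarrow> real) \<Rightarrow> 'a \<Rightarrow> real" where
  "autocorr g x = mean (\<lambda>t. g (t + x) * g t)"

definition quad_form :: "('a::ab_group_add \<Rightarrow> real) \<Rightarrow> nat \<Rightarrow> (nat \<Rightarrow> 'a) \<Rightarrow> (nat \<Rightarrow> real) \<Rightarrow> real"
  where "quad_form K n x a = (\<Sum>i<n. \<Sum>j<n. a i * a j * K (x i - x j))"

context compact_abelian_group
begin

text \<open>By invariance of the mean, autocorr g (u - v) is the mean of g(. + u) g(. + v).\<close>

lemma has_mean_autocorr:
  fixes g :: "'a \<Rightarrow> real"
  assumes g: "continuous_on UNIV g"
  shows "has_mean (\<lambda>s. g (s + u) * g (s + v)) (autocorr g (u - v))"
proof -
  have "has_mean (\<lambda>t. g (t + (u - v)) * g t) (autocorr g (u - v))"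
    unfolding autocorr_def
    by (intro has_mean_mean continuous_on_mult continuous_on_translate g)
  from has_mean_translate[OF this, of v] show ?thesis by (simp add: algebra_simps)
qed

lemma autocorr_even:
  fixes g :: "'a \<Rightarrow> real"
  assumes g: "continuous_on UNIV g"
  shows "autocorr g (- x) = autocorr g x"
proof -
  have "has_mean (\<lambda>s. g (s + 0) * g (s + x)) (autocorr g (0 - x))"
    by (rule has_mean_autocorr[OF g])
  moreover have "has_mean (\<lambda>s. g (s + 0) * g (s + x)) (autocorr g (x - 0))"
    using has_mean_autocorr[OF g, of x 0] by (simp add: mult.commute)
  ultimately show ?thesis using has_mean_unique by force
qed

lemma autocorr_bounded:
  fixes g :: "'a \<Rightarrow> real"
  assumes g: "continuous_on UNIV g" and bounded: "\<And>x. \<bar>g x\<bar> \<le> 1"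
  shows "\<bar>autocorr g x\<bar> \<le> 1"
proof -
  have "\<bar>g (s + x) * g (s + 0) - 0\<bar> \<le> 1" for s
    using bounded[of "s + x"] bounded[of s] by (simp add: abs_mult mult_le_one)
  from has_mean_dist[OF has_mean_autocorr[OF g] has_mean_const this] show ?thesis by simp
qed

lemma continuous_on_autocorr:
  fixes g :: "'a \<Rightarrow> real"
  assumes g: "continuous_on UNIV g" and bounded: "\<And>x. \<bar>g x\<bar> \<le> 1"
  shows "continuous_on UNIV (autocorr g)"
proof (rule continuous_on_if_translation_uniform)
  fix e :: real assume "e > 0"
  then obtain W where W: "open W" "0 \<in> W" "\<And>x w. w \<in> W \<Longrightarrow> dist (g (x + w)) (g x) < e/2"
    using uniformly_continuous_translates[OF g, of "e/2"] by auto
  have "dist (autocorr g x) (autocorr g y) < e" if "x - y \<in> W" for x y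
  proof -
    have "\<bar>g (t + x) * g (t + 0) - g (t + y) * g (t + 0)\<bar> \<le> e/2" for t
    proof -
      have "\<bar>g (t + x) - g (t + y)\<bar> \<le> e/2"
        using W(3)[OF that, of "t + y"] by (simp add: dist_real_def algebra_simps)
      then have "\<bar>g (t + x) - g (t + y)\<bar> * \<bar>g t\<bar> \<le> e/2 * 1"
        using bounded[of t] \<open>e > 0\<close> by (intro mult_mono) auto
      then show ?thesis by (simp add: abs_mult[symmetric] left_diff_distrib)
    qed
    from has_mean_dist[OF has_mean_autocorr[OF g] has_mean_autocorr[OF g] this]
    show ?thesis using \<open>e > 0\<close> by (simp add: dist_real_def)
  qed
  with W(1,2) show "\<exists>W. open W \<and> 0 \<in> W \<and> (\<forall>x y. x - y \<in> W \<longrightarrow> dist (autocorr g x) (autocorr g y) < e)"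
    by blast
qed

lemma quad_form_autocorr:
  fixes g :: "'a \<Rightarrow> real"
  assumes g: "continuous_on UNIV g"
  shows "quad_form (autocorr g) n x a = mean (\<lambda>s. (\<Sum>i<n. a i * g (s + x i))\<^sup>2)"
proof -
  have "(\<Sum>i<n. a i * g (s + x i))\<^sup>2 = (\<Sum>i<n. \<Sum>j<n. a i * a j * (g (s + x i) * g (s + x j)))" for s
    by (simp add: power2_eq_square sum_product mult_ac)
  moreover have "has_mean (\<lambda>s. \<Sum>i<n. \<Sum>j<n. a i * a j * (g (s + x i) * g (s + x j)))
      (quad_form (autocorr g) n x a)"
    unfolding quad_form_def
    by (intro has_mean_sum finite_lessThan has_mean_scale has_mean_autocorr g)
  ultimately show ?thesis by (simp add: mean_eqI)
qed

lemma quad_form_autocorr_nonneg: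
  fixes g :: "'a \<Rightarrow> real"
  assumes g: "continuous_on UNIV g"
  shows "0 \<le> quad_form (autocorr g) n x a"
  unfolding quad_form_autocorr[OF g]
  by (intro mean_lower continuous_on_power continuous_on_sum continuous_on_mult
      continuous_on_const continuous_on_translate g) simp

lemma quad_form_autocorr_pos:
  fixes g :: "'a \<Rightarrow> real"
  assumes g: "continuous_on UNIV g" and nonzero: "(\<Sum>i<n. a i * g (x i)) \<noteq> 0"
  shows "0 < quad_form (autocorr g) n x a"
  unfolding quad_form_autocorr[OF g]
  by (rule mean_pos[where p = 0])
     (use nonzero in \<open>simp_all add: continuous_on_power continuous_on_sum continuous_on_mult
       continuous_on_translate g\<close>)

end

section \<open>Metrisability gives a strictly positive definite function\<close>

text \<open>A compact metric space carries countably many bump functions separating any point from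
  any finite set of other points: bumps of radius 1/(n+1) around the points of finite
  1/(n+1)-nets.\<close>

lemma (in Metric_space) separating_bumps:
  assumes "compact_space mtopology" and "M \<noteq> {}"
  obtains G :: "nat \<Rightarrow> 'a \<Rightarrow> real"
  where "\<And>k. continuous_map mtopology euclidean (G k)" "\<And>k x. \<bar>G k x\<bar> \<le> 1"
    and "\<And>S p. finite S \<Longrightarrow> S \<subseteq> M \<Longrightarrow> p \<in> M \<Longrightarrow> p \<notin> S \<Longrightarrow> \<exists>k. G k p \<noteq> 0 \<and> (\<forall>q\<in>S. G k q = 0)"
proof -
  have "\<exists>K. finite K \<and> K \<subseteq> M \<and> M \<subseteq> (\<Union>p\<in>K. mball p (1 / real (Suc n)))" for n
    using assms(1) by (simp add: compact_space_eq_mcomplete_mtotally_bounded mtotally_bounded_def)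
  then obtain K where K: "\<And>n. finite (K n)" "\<And>n. K n \<subseteq> M"
    "\<And>n. M \<subseteq> (\<Union>p\<in>K n. mball p (1 / real (Suc n)))" by metis
  define bump where "bump n p x = max 0 (1 / real (Suc n) - d p x)" for n p x
  define Gs where "Gs = (\<Union>n. bump n ` K n)"
  have "countable Gs" unfolding Gs_def by (simp add: K(1) countable_finite)
  moreover have "Gs \<noteq> {}"
  proof -
    obtain q where "q \<in> M" using assms(2) by blast
    then obtain p where "p \<in> K 0" using K(3)[of 0] by blast
    then show ?thesis by (auto simp: Gs_def)
  qed
  ultimately have G: "range (from_nat_into Gs) = Gs"
    by (simp add: range_from_nat_into)
  show ?thesis
  proof
    fix k
    have "from_nat_into Gs k \<in> Gs" using G by blast
    then obtain n p where "from_nat_into Gs k = bump n p" "p \<in> K n" unfolding Gs_def by blast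
    moreover from this(2) have "p \<in> M" using K(2) by blast
    moreover have "continuous_map mtopology euclidean (d p)"
      using continuous_on_mdist[of p "metric (M, d)"] \<open>p \<in> M\<close>
      by (simp add: mtopology_of_def Metric_space_axioms)
    ultimately show "continuous_map mtopology euclidean (from_nat_into Gs k)"
      unfolding bump_def by (simp add: continuous_map_real_max continuous_map_diff)
    have "0 \<le> bump n p x" "bump n p x \<le> 1 / real (Suc n)" for x
      unfolding bump_def by (auto intro: max.boundedI)
    then have "\<bar>bump n p x\<bar> \<le> 1 / real (Suc n)" for x by (simp only: abs_of_nonneg)
    also have "1 / real (Suc n) \<le> 1" by simp
    finally show "\<bar>from_nat_into Gs k x\<bar> \<le> 1" for x
      using \<open>from_nat_into Gs k = bump n p\<close> by simp
  next
    fix S p assume S: "finite S" "S \<subseteq> M" "p \<in> M" "p \<notin> S"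
    define \<delta> where "\<delta> = Min (insert 1 (d p ` S))"
    have "\<delta> > 0" unfolding \<delta>_def using S by (auto simp: Min_gr_iff mdist_pos_less)
    have \<delta>_le: "\<delta> \<le> d p q" if "q \<in> S" for q
      unfolding \<delta>_def using S(1) that by (intro Min_le) auto
    obtain n where n: "1 / real (Suc n) < \<delta> / 2" using \<open>\<delta> > 0\<close> nat_approx_posE[of "\<delta>/2"] by auto
    obtain c where c: "c \<in> K n" "d c p < 1 / real (Suc n)" using K(3)[of n] S(3) by auto
    have "bump n c q = 0" if "q \<in> S" for q
    proof -
      have "d p q \<le> d p c + d c q" using triangle K(2) c(1) S(2,3) that by blast
      then have "1 / real (Suc n) \<le> d c q" using \<delta>_le[OF that] n c(2) commute[of c p] by linarith
      then show ?thesis by (simp add: bump_def)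
    qed
    moreover have "bump n c p \<noteq> 0" using c(2) by (simp add: bump_def)
    moreover obtain k where "from_nat_into Gs k = bump n c"
    proof -
      have "bump n c \<in> range (from_nat_into Gs)" using G c(1) by (auto simp: Gs_def)
      then show ?thesis using that by (metis rangeE)
    qed
    ultimately show "\<exists>k. from_nat_into Gs k p \<noteq> 0 \<and> (\<forall>q\<in>S. from_nat_into Gs k q = 0)" by metis
  qed
qed

lemma separating_bumps_metrizable:
  fixes ty :: "'a::topological_space itself"
  assumes compact: "compact (UNIV :: 'a set)"
    and metrizable: "metrizable_space (euclidean :: 'a topology)"
  obtains G :: "nat \<Rightarrow> 'a \<Rightarrow> real"
  where "\<And>k. continuous_on UNIV (G k)" "\<And>k x. \<bar>G k x\<bar> \<le> 1"
    and "\<And>S p. finite S \<Longrightarrow> p \<notin> S \<Longrightarrow> \<exists>k. G k p \<noteq> 0 \<and> (\<forall>q\<in>S. G k q = 0)"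
proof -
  obtain M d where "Metric_space M d" and top: "(euclidean :: 'a topology) = Metric_space.mtopology M d"
    using metrizable unfolding metrizable_space_def by blast
  interpret Metric_space M d by fact
  have M: "M = UNIV" using arg_cong[OF top, of topspace] by simp
  have "compact_space (euclidean :: 'a topology)" using compact by (simp add: compact_space_def)
  with top have compact_metric: "compact_space mtopology" by simp
  have nonempty: "M \<noteq> {}" using M by simp
  obtain G :: "nat \<Rightarrow> 'a \<Rightarrow> real" where
    G: "\<And>k. continuous_map mtopology euclidean (G k)" "\<And>k x. \<bar>G k x\<bar> \<le> 1"
      "\<And>S p. finite S \<Longrightarrow> S \<subseteq> M \<Longrightarrow> p \<in> M \<Longrightarrow> p \<notin> S \<Longrightarrow>
         \<exists>k. G k p \<noteq> 0 \<and> (\<forall>q\<in>S. G k q = 0)"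
    using separating_bumps[OF compact_metric nonempty] by blast
  show ?thesis
  proof (rule that)
    show "continuous_on UNIV (G k)" for k
      using G(1)[of k] top continuous_map_iff_continuous2 by metis
  qed (use G(2,3) M in auto)
qed

lemma complex_form_real_even_kernel:
  fixes K :: "'a::ab_group_add \<Rightarrow> real"
  assumes even: "\<And>y. K (- y) = K y"
  shows "(\<Sum>i<n. \<Sum>j<n. c i * cnj (c j) * complex_of_real (K (x i - x j)))
       = complex_of_real (quad_form K n x (\<lambda>i. Re (c i)) + quad_form K n x (\<lambda>i. Im (c i)))"
proof (rule complex_eqI)
  have Re_term: "Re (c i * cnj (c j) * complex_of_real r) = (Re (c i) * Re (c j) + Im (c i) * Im (c j)) * r"
    for i j r by (simp add: algebra_simps)
  show "Re (\<Sum>i<n. \<Sum>j<n. c i * cnj (c j) * complex_of_real (K (x i - x j)))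
      = Re (complex_of_real (quad_form K n x (\<lambda>i. Re (c i)) + quad_form K n x (\<lambda>i. Im (c i))))"
    by (simp add: Re_term quad_form_def distrib_right sum.distrib)
next
  have Im_term: "Im (c i * cnj (c j) * complex_of_real r) = (Im (c i) * Re (c j) - Re (c i) * Im (c j)) * r"
    for i j r by (simp add: algebra_simps)
  have sym: "K (x j - x i) = K (x i - x j)" for i j using even[of "x i - x j"] by simp
  have "(\<Sum>i<n. \<Sum>j<n. Im (c i) * Re (c j) * K (x i - x j))
      = (\<Sum>i<n. \<Sum>j<n. Re (c i) * Im (c j) * K (x i - x j))"
    by (subst sum.swap) (simp add: sym mult_ac)
  then show "Im (\<Sum>i<n. \<Sum>j<n. c i * cnj (c j) * complex_of_real (K (x i - x j)))
      = Im (complex_of_real (quad_form K n x (\<lambda>i. Re (c i)) + quad_form K n x (\<lambda>i. Im (c i))))"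
    by (simp add: Im_term left_diff_distrib sum_subtractf)
qed

lemma quad_form_suminf:
  assumes "\<And>y. summable (\<lambda>k. K k y)"
  shows "summable (\<lambda>k. quad_form (K k) n x a)"
    and "quad_form (\<lambda>y. \<Sum>k. K k y) n x a = (\<Sum>k. quad_form (K k) n x a)"
proof -
  have s: "summable (\<lambda>k. a i * a j * K k (x i - x j))" for i j
    by (intro summable_mult assms)
  then show "summable (\<lambda>k. quad_form (K k) n x a)"
    unfolding quad_form_def by (intro summable_sum)
  have "quad_form (\<lambda>y. \<Sum>k. K k y) n x a = (\<Sum>i<n. \<Sum>j<n. \<Sum>k. a i * a j * K k (x i - x j))"
    by (simp add: quad_form_def suminf_mult[OF assms])
  also have "\<dots> = (\<Sum>k. quad_form (K k) n x a)"
    unfolding quad_form_def using s by (simp add: suminf_sum summable_sum)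
  finally show "quad_form (\<lambda>y. \<Sum>k. K k y) n x a = (\<Sum>k. quad_form (K k) n x a)" .
qed

definition weighted_autocorr :: "(nat \<Rightarrow> 'a::ab_group_add \<Rightarrow> real) \<Rightarrow> 'a \<Rightarrow> real" where
  "weighted_autocorr G y = (\<Sum>k. (1/2)^k * autocorr (G k) y)"

context compact_abelian_group
begin

lemma weighted_autocorr:
  fixes G :: "nat \<Rightarrow> 'a \<Rightarrow> real"
  assumes cont: "\<And>k. continuous_on UNIV (G k)" and bounded: "\<And>k x. \<bar>G k x\<bar> \<le> 1"
  shows "continuous_on UNIV (weighted_autocorr G)"
    and "weighted_autocorr G (- y) = weighted_autocorr G y"
    and "summable (\<lambda>k. (1/2)^k * quad_form (autocorr (G k)) n x a)"
    and "quad_form (weighted_autocorr G) n x a = (\<Sum>k. (1/2)^k * quad_form (autocorr (G k)) n x a)"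
proof -
  define K where "K k y = (1/2)^k * autocorr (G k) y" for k y
  have norm_K: "norm (K k y) \<le> (1/2)^k" for k y
    using autocorr_bounded[OF cont bounded, of k y] by (simp add: K_def abs_mult)
  have geom: "summable (\<lambda>k. (1/2::real)^k)" by (rule summable_geometric) simp
  have summable: "summable (\<lambda>k. K k y)" for y by (rule summable_comparison_test'[OF geom norm_K])
  have F: "weighted_autocorr G = (\<lambda>y. \<Sum>k. K k y)"
    by (simp add: weighted_autocorr_def K_def fun_eq_iff)
  have limit: "uniform_limit UNIV (\<lambda>m y. \<Sum>k<m. K k y) (weighted_autocorr G) sequentially"
    unfolding F by (rule Weierstrass_m_test[OF _ geom]) (rule norm_K)
  have partial_sums: "\<forall>\<^sub>F m in sequentially. continuous_on UNIV (\<lambda>y. \<Sum>k<m. K k y)"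
    unfolding K_def
    by (intro always_eventually allI continuous_on_sum continuous_on_mult continuous_on_const
        continuous_on_autocorr cont bounded)
  show "continuous_on UNIV (weighted_autocorr G)"
    by (rule uniform_limit_theorem[OF partial_sums limit]) simp
  show "weighted_autocorr G (- y) = weighted_autocorr G y"
    by (simp add: weighted_autocorr_def autocorr_even[OF cont])
  have "quad_form (K k) n x a = (1/2)^k * quad_form (autocorr (G k)) n x a" for k
    by (simp add: quad_form_def K_def sum_distrib_left mult_ac)
  then show "summable (\<lambda>k. (1/2)^k * quad_form (autocorr (G k)) n x a)"
    "quad_form (weighted_autocorr G) n x a = (\<Sum>k. (1/2)^k * quad_form (autocorr (G k)) n x a)"
    using quad_form_suminf[where K = K and n = n and x = x and a = a, OF summable]
    by (simp_all add: F)
qed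

lemma quad_form_weighted_autocorr_nonneg:
  fixes G :: "nat \<Rightarrow> 'a \<Rightarrow> real"
  assumes cont: "\<And>k. continuous_on UNIV (G k)" and bounded: "\<And>k x. \<bar>G k x\<bar> \<le> 1"
  shows "0 \<le> quad_form (weighted_autocorr G) n x a"
  unfolding weighted_autocorr(4)[OF cont bounded]
  by (intro suminf_nonneg weighted_autocorr(3)[OF cont bounded] mult_nonneg_nonneg
      quad_form_autocorr_nonneg cont) simp

lemma quad_form_weighted_autocorr_pos:
  fixes G :: "nat \<Rightarrow> 'a \<Rightarrow> real"
  assumes cont: "\<And>k. continuous_on UNIV (G k)" and bounded: "\<And>k x. \<bar>G k x\<bar> \<le> 1"
    and detect: "(\<Sum>i<n. a i * G k (x i)) \<noteq> 0"
  shows "0 < quad_form (weighted_autocorr G) n x a"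
proof -
  have summable: "summable (\<lambda>j. (1/2)^j * quad_form (autocorr (G j)) n x a)"
    by (rule weighted_autocorr(3)[OF cont bounded])
  have nonneg: "0 \<le> (1/2)^j * quad_form (autocorr (G j)) n x a" for j
    by (simp add: quad_form_autocorr_nonneg[OF cont])
  have "0 < (1/2)^k * quad_form (autocorr (G k)) n x a"
    using quad_form_autocorr_pos[OF cont detect] by simp
  from suminf_pos2[OF summable nonneg this] show ?thesis
    by (simp add: weighted_autocorr(4)[OF cont bounded])
qed

text \<open>A complex combination splits into its real and imaginary
  parts, and whichever coefficient of x_0 is nonzero is detected by a bump function that
  vanishes at the other points.\<close>

theorem strictly_pos_def_if_metrizable:
  assumes metrizable: "metrizable_space (euclidean :: 'a topology)"
  shows "\<exists>f :: 'a \<Rightarrow> complex. continuous_on UNIV f \<and> strictly_pos_def f"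
proof -
  obtain G :: "nat \<Rightarrow> 'a \<Rightarrow> real" where cont: "\<And>k. continuous_on UNIV (G k)"
    and bounded: "\<And>k x. \<bar>G k x\<bar> \<le> 1"
    and separating: "\<And>S p. finite S \<Longrightarrow> p \<notin> S \<Longrightarrow> \<exists>k. G k p \<noteq> 0 \<and> (\<forall>q\<in>S. G k q = 0)"
    using separating_bumps_metrizable[OF compact_group metrizable] by blast
  define F where "F = weighted_autocorr G"
  have "strictly_pos_def (\<lambda>y. complex_of_real (F y))"
    unfolding strictly_pos_def_def
  proof (intro allI impI)
    fix n :: nat and x :: "nat \<Rightarrow> 'a" and c :: "nat \<Rightarrow> complex"
    assume n: "1 \<le> n" and inj: "inj_on x {..<n}" and nonzero: "\<forall>i<n. c i \<noteq> 0"
    have "0 \<in> {..<n}" "{1..<n} \<subseteq> {..<n}" using n by auto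
    then have "x 0 \<notin> x ` {1..<n}" using inj_on_image_mem_iff[OF inj] by simp
    then obtain k where k: "G k (x 0) \<noteq> 0" "\<forall>q \<in> x ` {1..<n}. G k q = 0"
      using separating by blast
    have "{..<n} = insert 0 {1..<n}" using n by auto
    then have detect: "(\<Sum>i<n. a i * G k (x i)) = a 0 * G k (x 0)" for a
      using k(2) by simp
    have pos: "0 < quad_form F n x a" if "a 0 \<noteq> 0" for a
      unfolding F_def by (rule quad_form_weighted_autocorr_pos[where k = k, OF cont bounded])
        (simp add: detect k(1) that)
    have "c 0 \<noteq> 0" using nonzero n by simp
    then have "0 < quad_form F n x (\<lambda>i. Re (c i)) + quad_form F n x (\<lambda>i. Im (c i))"
    proof (cases "Re (c 0) = 0")
      case True
      with \<open>c 0 \<noteq> 0\<close> have "Im (c 0) \<noteq> 0" by (simp add: complex_eq_iff)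
      with True show ?thesis
        using pos[of "\<lambda>i. Im (c i)"] quad_form_weighted_autocorr_nonneg[OF cont bounded]
        by (simp add: F_def add_nonneg_pos)
    next
      case False
      then show ?thesis
        using pos[of "\<lambda>i. Re (c i)"] quad_form_weighted_autocorr_nonneg[OF cont bounded]
        by (simp add: F_def add_pos_nonneg)
    qed
    then show "0 < (\<Sum>i<n. \<Sum>j<n. c i * cnj (c j) * complex_of_real (F (x i - x j)))"
      by (simp add: complex_form_real_even_kernel F_def weighted_autocorr(2)[OF cont bounded]
          less_complex_def)
  qed
  moreover have "continuous_on UNIV (\<lambda>y. complex_of_real (F y))"
    unfolding F_def using weighted_autocorr(1)[OF cont bounded] by simp
  ultimately show ?thesis by blast
qed

end

theorem corollary2p4:
  assumes "topological_group TYPE('a::{t2_space, ab_group_add})"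
    and "compact (UNIV :: 'a set)"
  shows "(\<exists>f :: 'a \<Rightarrow> complex. continuous_on UNIV f \<and> strictly_pos_def f)
         \<longleftrightarrow> metrizable_space (euclidean :: 'a topology)"
proof -
  interpret compact_abelian_group "TYPE('a)"
    using assms by unfold_locales
  show ?thesis
    using metrizable_if_strictly_pos_def[OF compact_abelian_group_axioms]
      strictly_pos_def_if_metrizable by blast
qed

end
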